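(* Let $\phi\ge 0$, $\sigma>0$ with $\sigma\neq 1$, $\rho>0$, $m>0$ be constants with $\rho+m(\sigma-1)(\phi+1)>0$. Let $c(t)>0$, $s(t)>0$, $p(t)$, $t\ge 0$, satisfy $$p=c^{-\sigma}s^{\phi(1-\sigma)},\qquad \dot s=ms-c,\qquad \dot p=\Big(\rho-m-\phi\frac{c}{s}\Big)p ,$$ with $c(0)=c_0$, $s(0)=s_0$, together with the transversality condition $\lim_{t\to\infty}e^{-\rho t}p(t)s(t)=0$. Then necessarily $$\frac{c_0}{s_0}\,\sigma(\phi+1)=\rho+m(\sigma-1)(\phi+1),$$ and $$s(t)=s_0e^{\frac{m(\phi+1)-\rho}{\sigma(\phi+1)}t},\quad c(t)=c_0e^{\frac{m(\phi+1)-\rho}{\sigma(\phi+1)}t},\quad p(t)=c_0^{-\sigma}s_0^{\phi(1-\sigma)}e^{(\rho-m-\phi\frac{c_0}{s_0})t}.$$ In particular $s$ and $c$ grow at the common constant rate $\frac{m(\phi+1)-\rho}{\sigma(\phi+1)}$ and $p$ at the constant rate $\rho-m-\phi\frac{c_0}{s_0}$.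
   Context: This system is the set of first-order optimality conditions for the optimal growth problem with environmental asset: maximize $\int_0^\infty \frac{(cs^\phi)^{1-\sigma}}{1-\sigma}e^{-\rho t}dt$ subject to $\dot s=ms-c$, with $p$ the costate variable. *)

theory Defs
  imports "HOL-Analysis.Analysis"
begin

end

theory Submission
  imports Defs
begin

text \<open>
  Write x = c / s. The relation p = c^(-\<sigma>) s^(\<phi>(1-\<sigma>)) gives the logarithmic derivative
  m - \<kappa> + \<phi> x of c, where \<kappa> = (\<rho> + m(\<sigma>-1)(\<phi>+1)) / \<sigma> > 0. Hence the ratio y = s / c
  solves the affine equation y' = \<kappa> y - (1 + \<phi>), and the discounted value e^(-\<rho>t) p c solves
  u' = -\<kappa> u. The transversality quantity e^(-\<rho>t) p s = u y therefore tends to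
  u(0) (y(0) - (1 + \<phi>)/\<kappa>), so it can vanish only if y starts, and hence stays, at the rest
  point (1 + \<phi>)/\<kappa>. Once c / s is constant, s, c and p solve linear equations and grow
  exponentially.
\<close>

lemma affine_ode_solution:
  fixes y :: "real \<Rightarrow> real"
  assumes ode: "\<And>t. t \<ge> 0 \<Longrightarrow> (y has_real_derivative k * (y t - e)) (at t within {0..})"
    and t: "t \<ge> 0"
  shows "y t = e + (y 0 - e) * exp (k * t)"
proof -
  define G where "G t = (y t - e) * exp (- k * t)" for t
  have "(G has_real_derivative 0) (at t within {0..})" if "t \<ge> 0" for t
  proof -
    have "(G has_real_derivative
            k * (y t - e) * exp (- k * t) + (y t - e) * (exp (- k * t) * (- k)))
          (at t within {0..})"
      unfolding G_def using ode[OF that] by (auto intro!: derivative_eq_intros)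
    then show ?thesis by (simp add: algebra_simps)
  qed
  then obtain C where "\<forall>t\<in>{0..}. G t = C"
    using has_field_derivative_zero_constant[of "{0::real..}" G] by auto
  then have "G t = G 0" using t by simp
  then show ?thesis by (simp add: G_def exp_minus field_simps)
qed

corollary linear_ode_solution:
  fixes y :: "real \<Rightarrow> real"
  assumes "\<And>t. t \<ge> 0 \<Longrightarrow> (y has_real_derivative k * y t) (at t within {0..})"
    and "t \<ge> 0"
  shows "y t = y 0 * exp (k * t)"
  using affine_ode_solution[where e = 0] assms by simp

lemma DERIV_of_DERIV_ln:
  fixes f :: "real \<Rightarrow> real"
  assumes pos: "\<And>x. x \<in> S \<Longrightarrow> f x > 0" and t: "t \<in> S"
    and ln_deriv: "((\<lambda>x. ln (f x)) has_real_derivative r) (at t within S)"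
  shows "(f has_real_derivative f t * r) (at t within S)"
proof -
  have "((\<lambda>x. exp (ln (f x))) has_real_derivative exp (ln (f t)) * r) (at t within S)"
    by (rule DERIV_chain2[OF DERIV_exp ln_deriv])
  then have "((\<lambda>x. exp (ln (f x))) has_real_derivative f t * r) (at t within S)"
    using pos t by simp
  then show ?thesis
    by (rule has_field_derivative_transform_within[where d = 1]) (use pos t in auto)
qed

locale optimality_system =
  fixes \<phi> \<sigma> \<rho> m :: real and c s p :: "real \<Rightarrow> real"
  assumes sigma_pos: "\<sigma> > 0"
    and growth: "\<rho> + m * (\<sigma> - 1) * (\<phi> + 1) > 0"
    and c_pos: "\<And>t. t \<ge> 0 \<Longrightarrow> c t > 0"
    and s_pos: "\<And>t. t \<ge> 0 \<Longrightarrow> s t > 0"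
    and p_def: "\<And>t. t \<ge> 0 \<Longrightarrow> p t = c t powr (- \<sigma>) * s t powr (\<phi> * (1 - \<sigma>))"
    and s_ode: "\<And>t. t \<ge> 0 \<Longrightarrow> (s has_real_derivative (m * s t - c t)) (at t within {0..})"
    and p_ode: "\<And>t. t \<ge> 0 \<Longrightarrow>
                  (p has_real_derivative ((\<rho> - m - \<phi> * c t / s t) * p t)) (at t within {0..})"
begin

definition \<kappa> :: real where "\<kappa> = (\<rho> + m * (\<sigma> - 1) * (\<phi> + 1)) / \<sigma>"

lemma kappa_pos: "\<kappa> > 0"
  using growth sigma_pos by (simp add: \<kappa>_def)

lemma p_pos: "t \<ge> 0 \<Longrightarrow> p t > 0"
  using p_def[of t] c_pos[of t] s_pos[of t] by simp

lemma DERIV_ln_s: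
  "t \<ge> 0 \<Longrightarrow> ((\<lambda>t. ln (s t)) has_real_derivative m - c t / s t) (at t within {0..})"
  using s_ode[of t] s_pos[of t] by (auto intro!: derivative_eq_intros simp: field_simps)

lemma DERIV_ln_p:
  "t \<ge> 0 \<Longrightarrow> ((\<lambda>t. ln (p t)) has_real_derivative \<rho> - m - \<phi> * c t / s t) (at t within {0..})"
  using p_ode[of t] p_pos[of t] by (auto intro!: derivative_eq_intros simp: field_simps)

lemma ln_c_eq: "t \<ge> 0 \<Longrightarrow> ln (c t) = (\<phi> * (1 - \<sigma>) * ln (s t) - ln (p t)) / \<sigma>"
  using p_def[of t] c_pos[of t] s_pos[of t] sigma_pos by (simp add: ln_mult field_simps)

lemma DERIV_c:
  assumes t: "t \<ge> 0"
  shows "(c has_real_derivative c t * (m - \<kappa> + \<phi> * c t / s t)) (at t within {0..})"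
proof (rule DERIV_of_DERIV_ln)
  have "((\<lambda>t. (\<phi> * (1 - \<sigma>) * ln (s t) - ln (p t)) / \<sigma>) has_real_derivative
          (\<phi> * (1 - \<sigma>) * (m - c t / s t) - (\<rho> - m - \<phi> * c t / s t)) / \<sigma>) (at t within {0..})"
    by (intro DERIV_cdivide DERIV_diff DERIV_cmult DERIV_ln_s DERIV_ln_p t)
  also have "(\<phi> * (1 - \<sigma>) * (m - c t / s t) - (\<rho> - m - \<phi> * c t / s t)) / \<sigma>
      = m - \<kappa> + \<phi> * c t / s t"
    unfolding \<kappa>_def using sigma_pos s_pos[OF t] by (simp add: field_simps)
  finally show "((\<lambda>t. ln (c t)) has_real_derivative m - \<kappa> + \<phi> * c t / s t) (at t within {0..})"
    by (rule has_field_derivative_transform_within[where d = 1]) (simp_all add: t ln_c_eq)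
qed (use t c_pos in auto)

lemma DERIV_capital_consumption_ratio:
  assumes t: "t \<ge> 0"
  shows "((\<lambda>t. s t / c t) has_real_derivative \<kappa> * (s t / c t - (1 + \<phi>) / \<kappa>)) (at t within {0..})"
proof -
  have "((\<lambda>t. s t / c t) has_real_derivative
          ((m * s t - c t) * c t - s t * (c t * (m - \<kappa> + \<phi> * c t / s t))) / (c t * c t))
        (at t within {0..})"
    using c_pos[OF t] by (intro derivative_intros s_ode DERIV_c t) auto
  moreover have "((m * s t - c t) * c t - s t * (c t * (m - \<kappa> + \<phi> * c t / s t))) / (c t * c t)
      = \<kappa> * (s t / c t - (1 + \<phi>) / \<kappa>)"
    using c_pos[OF t] s_pos[OF t] kappa_pos by (simp add: field_simps)
  ultimately show ?thesis by simp
qed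

lemma DERIV_discounted_consumption_value:
  assumes t: "t \<ge> 0"
  shows "((\<lambda>t. exp (- \<rho> * t) * p t * c t) has_real_derivative
           - \<kappa> * (exp (- \<rho> * t) * p t * c t)) (at t within {0..})"
  by (auto intro!: derivative_eq_intros p_ode[OF t] DERIV_c[OF t] simp: algebra_simps)

lemma consumption_capital_ratio_eq:
  assumes transv: "((\<lambda>t. exp (- \<rho> * t) * p t * s t) \<longlongrightarrow> 0) at_top"
    and t: "t \<ge> 0"
  shows "c t / s t = \<kappa> / (1 + \<phi>)"
proof -
  define A where "A = (1 + \<phi>) / \<kappa>"
  define y0 where "y0 = s 0 / c 0"
  define u0 where "u0 = p 0 * c 0"
  have ratio: "s t / c t = A + (y0 - A) * exp (\<kappa> * t)" if "t \<ge> 0" for t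
    using affine_ode_solution[OF DERIV_capital_consumption_ratio that]
    by (simp add: A_def y0_def)
  have discounted: "exp (- \<rho> * t) * p t * c t = u0 * exp (- \<kappa> * t)" if "t \<ge> 0" for t
    using linear_ode_solution[OF DERIV_discounted_consumption_value that] by (simp add: u0_def)
  have "\<forall>\<^sub>F t in at_top. exp (- \<rho> * t) * p t * s t = u0 * (A * exp (- \<kappa> * t) + (y0 - A))"
  proof (rule eventually_mono[OF eventually_ge_at_top[of 0]])
    fix t :: real assume "t \<ge> 0"
    then have "exp (- \<rho> * t) * p t * s t = u0 * exp (- \<kappa> * t) * (s t / c t)"
      using discounted[of t] c_pos[of t] by (simp add: field_simps)
    then show "exp (- \<rho> * t) * p t * s t = u0 * (A * exp (- \<kappa> * t) + (y0 - A))"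
      using ratio[OF \<open>t \<ge> 0\<close>] by (simp add: exp_minus field_simps)
  qed
  with transv have "((\<lambda>t. u0 * (A * exp (- \<kappa> * t) + (y0 - A))) \<longlongrightarrow> 0) at_top"
    by (rule tendsto_cong[THEN iffD1, rotated])
  moreover have "((\<lambda>t. exp (- \<kappa> * t)) \<longlongrightarrow> 0) at_top"
    using kappa_pos by (intro filterlim_compose[OF exp_at_bot] filterlim_tendsto_neg_mult_at_bot
        tendsto_const filterlim_ident) auto
  then have "((\<lambda>t. u0 * (A * exp (- \<kappa> * t) + (y0 - A))) \<longlongrightarrow> u0 * (A * 0 + (y0 - A))) at_top"
    by (intro tendsto_intros)
  ultimately have "u0 * (y0 - A) = 0"
    using tendsto_unique[OF trivial_limit_at_top_linorder] by fastforce
  moreover have "u0 > 0"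
    using p_pos[of 0] c_pos[of 0] by (simp add: u0_def)
  ultimately have "y0 = A" by simp
  with ratio[OF t] have "s t / c t = A" by simp
  then show ?thesis
    unfolding A_def by (metis inverse_divide)
qed

lemma balanced_growth:
  assumes transv: "((\<lambda>t. exp (- \<rho> * t) * p t * s t) \<longlongrightarrow> 0) at_top"
    and t: "t \<ge> 0"
  shows "s t = s 0 * exp ((m - c 0 / s 0) * t)"
    and "c t = c 0 * exp ((m - c 0 / s 0) * t)"
    and "p t = p 0 * exp ((\<rho> - m - \<phi> * c 0 / s 0) * t)"
proof -
  have ratio: "c t / s t = c 0 / s 0" if "t \<ge> 0" for t
    using consumption_capital_ratio_eq[OF transv that] consumption_capital_ratio_eq[OF transv, of 0]
    by simp
  have c_eq: "c t = c 0 / s 0 * s t" if "t \<ge> 0" for t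
    using ratio[OF that] s_pos[OF that] by (simp add: field_simps)
  have "(s has_real_derivative (m - c 0 / s 0) * s t) (at t within {0..})" if "t \<ge> 0" for t
    using s_ode[OF that] c_eq[OF that] by (simp add: algebra_simps)
  with t show s_t: "s t = s 0 * exp ((m - c 0 / s 0) * t)"
    by (intro linear_ode_solution)
  show "c t = c 0 * exp ((m - c 0 / s 0) * t)"
    using c_eq[OF t] s_t s_pos[of 0] by simp
  have "(p has_real_derivative (\<rho> - m - \<phi> * c 0 / s 0) * p t) (at t within {0..})"
    if "t \<ge> 0" for t
    using p_ode[OF that] by (simp only: times_divide_eq_right[symmetric] ratio[OF that])
  with t show "p t = p 0 * exp ((\<rho> - m - \<phi> * c 0 / s 0) * t)"
    by (intro linear_ode_solution)
qed

end

theorem mainTheorem3: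
  fixes \<phi> \<sigma> \<rho> m c0 s0 :: real
    and c s p :: "real \<Rightarrow> real"
  assumes phi: "\<phi> \<ge> 0"
    and sigma_pos: "\<sigma> > 0" and sigma_ne1: "\<sigma> \<noteq> 1"
    and rho: "\<rho> > 0" and m: "m > 0"
    and growth: "\<rho> + m * (\<sigma> - 1) * (\<phi> + 1) > 0"
    and c_pos: "\<And>t. t \<ge> 0 \<Longrightarrow> c t > 0"
    and s_pos: "\<And>t. t \<ge> 0 \<Longrightarrow> s t > 0"
    and p_def: "\<And>t. t \<ge> 0 \<Longrightarrow> p t = c t powr (- \<sigma>) * s t powr (\<phi> * (1 - \<sigma>))"
    and s_ode: "\<And>t. t \<ge> 0 \<Longrightarrow> (s has_real_derivative (m * s t - c t)) (at t within {0..})"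
    and p_ode: "\<And>t. t \<ge> 0 \<Longrightarrow>
                  (p has_real_derivative ((\<rho> - m - \<phi> * c t / s t) * p t)) (at t within {0..})"
    and c_init: "c 0 = c0" and s_init: "s 0 = s0"
    and transv: "((\<lambda>t. exp (- \<rho> * t) * p t * s t) \<longlongrightarrow> 0) at_top"
  shows "c0 / s0 * \<sigma> * (\<phi> + 1) = \<rho> + m * (\<sigma> - 1) * (\<phi> + 1)
         \<and> (\<forall>t\<ge>0.
              s t = s0 * exp ((m * (\<phi> + 1) - \<rho>) / (\<sigma> * (\<phi> + 1)) * t)
            \<and> c t = c0 * exp ((m * (\<phi> + 1) - \<rho>) / (\<sigma> * (\<phi> + 1)) * t)
            \<and> p t = c0 powr (- \<sigma>) * s0 powr (\<phi> * (1 - \<sigma>))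
                     * exp ((\<rho> - m - \<phi> * c0 / s0) * t))"
proof -
  interpret optimality_system \<phi> \<sigma> \<rho> m c s p
    by unfold_locales (fact sigma_pos growth c_pos s_pos p_def s_ode p_ode)+
  have ratio0: "c0 / s0 = \<kappa> / (1 + \<phi>)"
    using consumption_capital_ratio_eq[OF transv, of 0] by (simp add: c_init s_init)
  have "\<sigma> * (\<phi> + 1) > 0"
    using sigma_pos phi by simp
  then have rate: "m - c0 / s0 = (m * (\<phi> + 1) - \<rho>) / (\<sigma> * (\<phi> + 1))"
    unfolding ratio0 \<kappa>_def by (simp add: field_simps)
  show ?thesis
  proof (intro conjI allI impI)
    show "c0 / s0 * \<sigma> * (\<phi> + 1) = \<rho> + m * (\<sigma> - 1) * (\<phi> + 1)"
      using ratio0 sigma_pos phi by (simp add: \<kappa>_def add.commute)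
    fix t :: real assume t: "t \<ge> 0"
    show "s t = s0 * exp ((m * (\<phi> + 1) - \<rho>) / (\<sigma> * (\<phi> + 1)) * t)"
      using balanced_growth(1)[OF transv t] by (simp only: c_init s_init rate)
    show "c t = c0 * exp ((m * (\<phi> + 1) - \<rho>) / (\<sigma> * (\<phi> + 1)) * t)"
      using balanced_growth(2)[OF transv t] by (simp only: c_init s_init rate)
    show "p t = c0 powr (- \<sigma>) * s0 powr (\<phi> * (1 - \<sigma>)) * exp ((\<rho> - m - \<phi> * c0 / s0) * t)"
      using balanced_growth(3)[OF transv t] p_def[of 0] by (simp only: c_init s_init order_refl)
  qed
qed

end
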